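(* Let $c>0$, $\Delta_1,\dots,\Delta_K\in(0,1]$ and $T\ge K$, let $\Psi_c\ge0$ be the unique solution $x\ge0$ of \[ \sum_{i=1}^K\Big(\mathbb{I}\{x\le\ln\Delta_i^{-1}\}e^{2x}+\mathbb{I}\{x>\ln\Delta_i^{-1}\}\frac{x-\ln\Delta_i^{-1}+c/2}{c\Delta_i^2/2}\Big)=T, \] and let $(x_1^*,\dots,x_K^* )$ be the optimal solution of $\mathscr{P}_c(\{\max\{\Delta_i,e^{-\Psi_c}\}\}_{i=1}^K,T)$ given by $x_i^*=\mathbb{I}\{\Psi_c\le\ln\Delta_i^{-1}\}e^{2\Psi_c}+\mathbb{I}\{\Psi_c>\ln\Delta_i^{-1}\}\frac{\Psi_c-\ln\Delta_i^{-1}+c/2}{c\Delta_i^2/2}$. Then \[ \sum_{i=1}^K\exp(-c x_i^*\Delta_i^2)\le e^{c}\,\mathscr{P}_c(\{\max\{\Delta_i,e^{-\Psi_c}\}\}_{i=1}^K,T). \]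
   Context: For $c>0$, $T\ge0$ and positive reals $D_1,\dots,D_K$, $\mathscr{P}_c(\{D_i\}_{i=1}^K,T)$ denotes the optimal value of: minimize $\sum_{i=1}^K\exp(-cx_iD_i^2)$ subject to $x_1+\dots+x_K=T$, $x_i\ge0$. *)

theory Defs
  imports Complex_Main
begin

text \<open>Optimal value of the program P_c({D_i}_{i=1..K}, T):
  minimize sum_i exp(-c x_i D_i^2) subject to sum_i x_i = T, x_i >= 0.
  Vectors are functions nat => real restricted to the indices 1..K.\<close>
definition opt_val :: "real \<Rightarrow> (nat \<Rightarrow> real) \<Rightarrow> nat \<Rightarrow> real \<Rightarrow> real" where
  "opt_val c D K T =
     Inf ((\<lambda>x. \<Sum>i\<in>{1..K}. exp (- c * x i * (D i)^2)) `
          {x. (\<Sum>i\<in>{1..K}. x i) = T \<and> (\<forall>i\<in>{1..K}. 0 \<le> x i)})"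

end

theory Submission
  imports Defs
begin

text \<open>Write \<open>D\<^sub>i = max \<Delta>\<^sub>i e\<^sup>-\<^sup>\<Psi>\<close>. The allocation \<open>x\<^sup>*\<close> equalises the marginal losses:
  \<open>c D\<^sub>i\<^sup>2 exp (- c x\<^sub>i\<^sup>* D\<^sub>i\<^sup>2) = c e\<^sup>-\<^sup>c\<^sup>-\<^sup>2\<^sup>\<Psi>\<close> for every \<open>i\<close>. Since \<open>y \<mapsto> exp (- a y)\<close> lies above
  its tangents, summing the tangent bounds at \<open>x\<^sup>*\<close> over any \<open>x\<close> with \<open>\<Sum> x\<^sub>i = T\<close> shows that
  \<open>x\<^sup>*\<close> is optimal for \<open>\<P>\<^sub>c({D\<^sub>i}, T)\<close>. Termwise, \<open>exp (- c x\<^sub>i\<^sup>* \<Delta>\<^sub>i\<^sup>2) \<le> e\<^sup>c exp (- c x\<^sub>i\<^sup>* D\<^sub>i\<^sup>2)\<close>: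
  both sides agree up to the factor \<open>e\<^sup>c\<close> when \<open>D\<^sub>i = \<Delta>\<^sub>i\<close>, and otherwise \<open>x\<^sub>i\<^sup>* D\<^sub>i\<^sup>2 = 1\<close>,
  so the right-hand side is \<open>1\<close>.\<close>

definition water_filling :: "real \<Rightarrow> real \<Rightarrow> real \<Rightarrow> real" where
  "water_filling c P d =
     (if P \<le> ln (1 / d) then exp (2 * P) else (P - ln (1 / d) + c / 2) / (c * d^2 / 2))"

lemma le_ln_inverse_iff:
  fixes d P :: real
  assumes "d > 0"
  shows "P \<le> ln (1 / d) \<longleftrightarrow> d \<le> exp (- P)"
proof -
  have "d \<le> exp (- P) \<longleftrightarrow> ln d \<le> - P"
    using assms by (metis exp_le_cancel_iff exp_ln)
  then show ?thesis
    using assms by (simp add: ln_div) linarith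
qed

lemma water_filling_eq:
  fixes c P d :: real
  assumes c: "c > 0" and d: "d > 0"
  defines "D \<equiv> max d (exp (- P))"
  shows "water_filling c P d = (2 * (P + ln D) + c) / (c * D^2)"
proof (cases "d \<le> exp (- P)")
  case True
  then have "D = exp (- P)" and "P \<le> ln (1 / d)"
    using le_ln_inverse_iff[OF d] by (auto simp: D_def)
  moreover have "exp (- P)^2 = exp (- (2 * P))"
    by (simp add: power2_eq_square flip: exp_add)
  then have "exp (2 * P) * exp (- P)^2 = 1"
    by (simp flip: exp_add)
  ultimately show ?thesis
    using c by (simp add: water_filling_def field_simps)
next
  case False
  then have "D = d" and "\<not> P \<le> ln (1 / d)"
    using le_ln_inverse_iff[OF d] by (auto simp: D_def)
  then show ?thesis
    using c d by (simp add: water_filling_def ln_div field_simps)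
qed

lemma water_filling_exponent:
  fixes c P d :: real
  assumes "c > 0" "d > 0"
  defines "D \<equiv> max d (exp (- P))"
  shows "c * water_filling c P d * D^2 = 2 * (P + ln D) + c"
proof -
  have "D > 0" by (simp add: D_def less_max_iff_disj)
  then show ?thesis
    using assms(1) water_filling_eq[OF assms(1,2)] by (simp add: D_def field_simps)
qed

lemma water_filling_nonneg:
  fixes c P d :: real
  assumes "c > 0" "d > 0"
  shows "0 \<le> water_filling c P d"
  using assms by (auto simp: water_filling_def intro!: divide_nonneg_pos)

lemma water_filling_marginal:
  fixes c P d :: real
  assumes "c > 0" "d > 0"
  defines "D \<equiv> max d (exp (- P))"
  shows "c * D^2 * exp (- c * water_filling c P d * D^2) = c * exp (- c - 2 * P)"
proof -
  have "D > 0" by (simp add: D_def less_max_iff_disj)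
  have "- c * water_filling c P d * D^2 = - (2 * (P + ln D) + c)"
    using water_filling_exponent[OF assms(1,2), of P] by (simp add: D_def)
  moreover have "D^2 * exp (- (2 * (P + ln D) + c)) = exp (- c - 2 * P)"
  proof -
    have "D^2 = exp (ln D) * exp (ln D)"
      using \<open>D > 0\<close> by (simp add: power2_eq_square)
    then have "D^2 * exp (- (2 * (P + ln D) + c)) = exp (ln D + ln D + - (2 * (P + ln D) + c))"
      by (simp only: exp_add)
    also have "\<dots> = exp (- c - 2 * P)"
      by (rule arg_cong[where f = exp]) (simp add: algebra_simps)
    finally show ?thesis .
  qed
  ultimately show ?thesis
    by (simp add: mult.assoc)
qed

lemma water_filling_loss_le:
  fixes c P d :: real
  assumes c: "c > 0" and d: "d > 0"
  defines "D \<equiv> max d (exp (- P))"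
  shows "exp (- c * water_filling c P d * d^2) \<le> exp c * exp (- c * water_filling c P d * D^2)"
proof (cases "d \<le> exp (- P)")
  case True
  then have "D = exp (- P)"
    by (simp add: D_def)
  then have "c * water_filling c P d * D^2 = c"
    using water_filling_exponent[OF c d, of P] by (simp add: D_def)
  then have "exp c * exp (- c * water_filling c P d * D^2) = 1"
    by (simp flip: exp_add)
  moreover have "exp (- c * water_filling c P d * d^2) \<le> 1"
    using c water_filling_nonneg[OF c d] by simp
  ultimately show ?thesis
    by simp
next
  case False
  then show ?thesis
    using c by (simp add: D_def)
qed

lemma exp_neg_tangent_le:
  fixes a y y\<^sub>0 :: real
  shows "exp (- a * y\<^sub>0) - a * exp (- a * y\<^sub>0) * (y - y\<^sub>0) \<le> exp (- a * y)"
proof -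
  have "exp (- a * y\<^sub>0) * (1 + - a * (y - y\<^sub>0)) \<le> exp (- a * y\<^sub>0) * exp (- a * (y - y\<^sub>0))"
    by (intro mult_left_mono exp_ge_add_one_self) simp
  also have "\<dots> = exp (- a * y)"
    by (simp flip: exp_add add: algebra_simps)
  finally show ?thesis
    by (simp add: algebra_simps)
qed

lemma opt_val_eq_if_equal_marginals:
  fixes c T \<mu> :: real and K :: nat and D x :: "nat \<Rightarrow> real"
  assumes sum_x: "(\<Sum>i\<in>{1..K}. x i) = T"
    and x_nonneg: "\<forall>i\<in>{1..K}. 0 \<le> x i"
    and marginal: "\<forall>i\<in>{1..K}. c * (D i)^2 * exp (- c * x i * (D i)^2) = \<mu>"
  shows "opt_val c D K T = (\<Sum>i\<in>{1..K}. exp (- c * x i * (D i)^2))"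
  unfolding opt_val_def
proof (rule cInf_eq_minimum)
  show "(\<Sum>i\<in>{1..K}. exp (- c * x i * (D i)^2))
    \<in> (\<lambda>x. \<Sum>i\<in>{1..K}. exp (- c * x i * (D i)^2)) `
        {x. (\<Sum>i\<in>{1..K}. x i) = T \<and> (\<forall>i\<in>{1..K}. 0 \<le> x i)}"
    using sum_x x_nonneg by blast
next
  fix v
  assume "v \<in> (\<lambda>x. \<Sum>i\<in>{1..K}. exp (- c * x i * (D i)^2)) `
      {x. (\<Sum>i\<in>{1..K}. x i) = T \<and> (\<forall>i\<in>{1..K}. 0 \<le> x i)}"
  then obtain y where sum_y: "(\<Sum>i\<in>{1..K}. y i) = T"
    and v: "v = (\<Sum>i\<in>{1..K}. exp (- c * y i * (D i)^2))"
    by blast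
  have "(\<Sum>i\<in>{1..K}. exp (- c * x i * (D i)^2))
      = (\<Sum>i\<in>{1..K}. exp (- c * x i * (D i)^2) - \<mu> * (y i - x i))"
    using sum_x sum_y by (simp add: sum_subtractf flip: sum_distrib_left)
  also have "\<dots> \<le> v"
    unfolding v
  proof (rule sum_mono)
    fix i
    assume "i \<in> {1..K}"
    then have "c * (D i)^2 * exp (- c * x i * (D i)^2) = \<mu>"
      using marginal by blast
    moreover have "exp (- c * x i * (D i)^2) - c * (D i)^2 * exp (- c * x i * (D i)^2) * (y i - x i)
        \<le> exp (- c * y i * (D i)^2)"
      using exp_neg_tangent_le[of "c * (D i)^2" "x i" "y i"] by (simp add: mult_ac)
    ultimately show "exp (- c * x i * (D i)^2) - \<mu> * (y i - x i) \<le> exp (- c * y i * (D i)^2)"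
      by simp
  qed
  finally show "(\<Sum>i\<in>{1..K}. exp (- c * x i * (D i)^2)) \<le> v" .
qed

theorem lemma5:
  fixes c T \<Psi> :: real and K :: nat and \<Delta> :: "nat \<Rightarrow> real"
  assumes c_pos: "c > 0"
    and \<Delta>_range: "\<forall>i\<in>{1..K}. 0 < \<Delta> i \<and> \<Delta> i \<le> 1"
    and T_ge: "T \<ge> real K"
    and \<Psi>_nonneg: "\<Psi> \<ge> 0"
    and \<Psi>_eq: "(\<Sum>i\<in>{1..K}.
        (if \<Psi> \<le> ln (1 / \<Delta> i) then exp (2 * \<Psi>)
         else (\<Psi> - ln (1 / \<Delta> i) + c / 2) / (c * (\<Delta> i)^2 / 2))) = T"
    and \<Psi>_unique: "\<forall>y\<ge>0. (\<Sum>i\<in>{1..K}.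
        (if y \<le> ln (1 / \<Delta> i) then exp (2 * y)
         else (y - ln (1 / \<Delta> i) + c / 2) / (c * (\<Delta> i)^2 / 2))) = T \<longrightarrow> y = \<Psi>"
    and xstar_def: "\<forall>i. xstar i =
        (if \<Psi> \<le> ln (1 / \<Delta> i) then exp (2 * \<Psi>)
         else (\<Psi> - ln (1 / \<Delta> i) + c / 2) / (c * (\<Delta> i)^2 / 2))"
  shows "(\<Sum>i\<in>{1..K}. exp (- c * xstar i * (\<Delta> i)^2))
           \<le> exp c * opt_val c (\<lambda>i. max (\<Delta> i) (exp (- \<Psi>))) K T"
proof -
  define D where "D = (\<lambda>i. max (\<Delta> i) (exp (- \<Psi>)))"
  have xstar: "xstar i = water_filling c \<Psi> (\<Delta> i)" for i
    using xstar_def by (simp add: water_filling_def)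
  have "opt_val c D K T = (\<Sum>i\<in>{1..K}. exp (- c * xstar i * (D i)^2))"
  proof (rule opt_val_eq_if_equal_marginals)
    show "(\<Sum>i\<in>{1..K}. xstar i) = T"
      using \<Psi>_eq xstar_def by simp
    show "\<forall>i\<in>{1..K}. 0 \<le> xstar i"
      using \<Delta>_range water_filling_nonneg[OF c_pos] by (simp add: xstar)
    show "\<forall>i\<in>{1..K}. c * (D i)^2 * exp (- c * xstar i * (D i)^2) = c * exp (- c - 2 * \<Psi>)"
      using \<Delta>_range water_filling_marginal[OF c_pos] by (simp add: xstar D_def)
  qed
  moreover have "(\<Sum>i\<in>{1..K}. exp (- c * xstar i * (\<Delta> i)^2))
      \<le> exp c * (\<Sum>i\<in>{1..K}. exp (- c * xstar i * (D i)^2))"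
    unfolding sum_distrib_left
    using \<Delta>_range water_filling_loss_le[OF c_pos] by (intro sum_mono) (simp add: xstar D_def)
  ultimately show ?thesis
    unfolding D_def by simp
qed

end
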